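(* Let $\lambda<0$ and let $p(x;\theta)=(1+\lambda\,\theta\cdot F(x))_+^{1/\lambda}e^{-\varphi(\theta)}$, $\theta\in\Theta\subset\mathbb{R}^d$, be a $\lambda$-exponential family satisfying the standing assumptions described in the context. Let $x_1,\ldots,x_n\in\mathcal{S}$ be data points, $y_i=F(x_i)$, and let $$\ell(\theta)=\sum_{i=1}^n\Big(\tfrac{1}{\lambda}\log(1+\lambda\,\theta\cdot y_i)-\varphi(\theta)\Big)$$ be the log-likelihood. Given $\theta(0)\in\Theta$, define the fixed-point iteration, for $k\ge 0$, $$\eta(k+1):=\sum_{i=1}^n w_i(\theta(k))\,y_i,\qquad \theta(k+1):=\nabla^{(\lambda)}\psi(\eta(k+1)),$$ where $w_i(\theta):=\dfrac{1/(1+\lambda\,\theta\cdot y_i)}{\sum_{j=1}^n 1/(1+\lambda\,\theta\cdot y_j)}$, and set $\eta(0)=\nabla^{(\lambda)}\varphi(\theta(0))$. Then for every $k\ge0$, $\ell(\theta(k+1))>\ell(\theta(k))$ unless $\theta(k)$ already satisfies the fixed-point condition $\nabla^{(\lambda)}\varphi(\theta(k))=\sum_{i=1}^n w_i(\theta(k))\,y_i$.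
   Context: Setting: $\mathcal{X}$ is a state space with reference measure $\nu$, $F=(F_1,\ldots,F_d):\mathcal{X}\to\mathbb{R}^d$ is a vector of statistics, $z_+=\max\{z,0\}$, and $\varphi(\theta)$ is defined by the normalization $\int_{\mathcal{X}}p(x;\theta)\,d\nu(x)=1$. The $\lambda$-gradient of a differentiable function $f$ is $\nabla^{(\lambda)}f(\theta):=\nabla f(\theta)/(1-\lambda\nabla f(\theta)\cdot\theta)$. Standing assumptions: $\lambda<0$; $\Theta=\{\theta\in\mathbb{R}^d:\int(1+\lambda\theta\cdot F(x))_+^{1/\lambda}d\nu(x)<\infty\}$ is the natural parameter set; the family satisfies the regularity condition of Wong and Zhang (2022, Condition III.10), under which $\varphi$ is differentiable on $\Theta$ with $1-\lambda\nabla\varphi(\theta)\cdot\theta>0$, the dual potential $\psi(\eta):=\sup_{\theta'\in\Theta}\{\frac1\lambda\log(1+\lambda\theta'\cdot\eta)-\varphi(\theta')\}$ (the $\lambda$-conjugate of $\varphi$) is such that $\frac1\lambda(e^{\lambda\psi}-1)$ is strictly convex on $\Xi$, and $\nabla^{(\lambda)}\varphi:\Theta\to\Xi$ is a diffeomorphism with inverse $\nabla^{(\lambda)}\psi$; moreover the dual parameter set $\Xi:=\nabla^{(\lambda)}\varphi(\Theta)$ is convex and contains the common support $\mathcal{S}:=\{x\in\mathcal{X}:p(x;\theta)>0\}$ of the family (so the iterates are well defined, with $\eta(k)\in\Xi$, $\theta(k)\in\Theta$). *)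

theory Defs
  imports "HOL-Analysis.Analysis"
begin

definition pos_part :: "real \<Rightarrow> real" where
  "pos_part z = max z 0"

text \<open>Unnormalized density (1 + l * theta.F(x))_+^(1/l); the value is 0 where the
  positive part vanishes (Isabelle convention 0 powr a = 0, matching p = 0 off the support).\<close>
definition lam_kernel :: "real \<Rightarrow> ('x \<Rightarrow> 'a::euclidean_space) \<Rightarrow> 'a \<Rightarrow> 'x \<Rightarrow> real" where
  "lam_kernel l F \<theta> x = pos_part (1 + l * (\<theta> \<bullet> F x)) powr (1 / l)"

definition nat_param_set :: "real \<Rightarrow> 'x measure \<Rightarrow> ('x \<Rightarrow> 'a::euclidean_space) \<Rightarrow> 'a set" where
  "nat_param_set l \<nu> F = {\<theta>. (\<integral>\<^sup>+ x. ennreal (lam_kernel l F \<theta> x) \<partial>\<nu>) < \<infinity>}"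

definition lam_phi :: "real \<Rightarrow> 'x measure \<Rightarrow> ('x \<Rightarrow> 'a::euclidean_space) \<Rightarrow> 'a \<Rightarrow> real" where
  "lam_phi l \<nu> F \<theta> = ln (enn2real (\<integral>\<^sup>+ x. ennreal (lam_kernel l F \<theta> x) \<partial>\<nu>))"

definition lam_density :: "real \<Rightarrow> 'x measure \<Rightarrow> ('x \<Rightarrow> 'a::euclidean_space) \<Rightarrow> 'a \<Rightarrow> 'x \<Rightarrow> real" where
  "lam_density l \<nu> F \<theta> x = lam_kernel l F \<theta> x * exp (- lam_phi l \<nu> F \<theta>)"

definition lam_psi :: "real \<Rightarrow> 'x measure \<Rightarrow> ('x \<Rightarrow> 'a::euclidean_space) \<Rightarrow> 'a \<Rightarrow> real" where
  "lam_psi l \<nu> F \<eta> = (SUP \<theta>'\<in>{\<theta>'\<in>nat_param_set l \<nu> F. 1 + l * (\<theta>' \<bullet> \<eta>) > 0}.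
      (1 / l) * ln (1 + l * (\<theta>' \<bullet> \<eta>)) - lam_phi l \<nu> F \<theta>')"

text \<open>lambda-gradient, given the ordinary gradient g = grad f(theta):
   grad^(l) f(theta) = g / (1 - l * g.theta).\<close>
definition lam_grad :: "real \<Rightarrow> 'a::euclidean_space \<Rightarrow> 'a \<Rightarrow> 'a" where
  "lam_grad l g \<theta> = (1 / (1 - l * (g \<bullet> \<theta>))) *\<^sub>R g"

definition strictly_convex_on :: "'a::real_vector set \<Rightarrow> ('a \<Rightarrow> real) \<Rightarrow> bool" where
  "strictly_convex_on S f \<longleftrightarrow> (\<forall>x\<in>S. \<forall>y\<in>S. \<forall>t. x \<noteq> y \<and> 0 < t \<and> t < 1 \<longrightarrow>
      f ((1 - t) *\<^sub>R x + t *\<^sub>R y) < (1 - t) * f x + t * f y)"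

definition loglik :: "real \<Rightarrow> ('a::euclidean_space \<Rightarrow> real) \<Rightarrow> nat \<Rightarrow> (nat \<Rightarrow> 'a) \<Rightarrow> 'a \<Rightarrow> real" where
  "loglik l \<phi> n y \<theta> = (\<Sum>i<n. (1 / l) * ln (1 + l * (\<theta> \<bullet> y i)) - \<phi> \<theta>)"

definition weight :: "real \<Rightarrow> nat \<Rightarrow> (nat \<Rightarrow> 'a::euclidean_space) \<Rightarrow> 'a \<Rightarrow> nat \<Rightarrow> real" where
  "weight l n y \<theta> i = (1 / (1 + l * (\<theta> \<bullet> y i))) / (\<Sum>j<n. 1 / (1 + l * (\<theta> \<bullet> y j)))"

end

theory Submission
  imports Defs
begin

(*
  The update is a minorise-maximise step. Fix theta and put eta = sum_i w_i(theta) y_i. As the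
  weights are proportional to 1 / (1 + l theta.y_i), the average of the ratios
  (1 + l theta'.y_i) / (1 + l theta.y_i) is (1 + l theta'.eta) / (1 + l theta.eta); concavity of the
  logarithm and l < 0 then bound loglik(theta') - loglik(theta) from below by n times the gain of
  the surrogate theta' |-> (1/l) log (1 + l theta'.eta) - phi(theta').
  The surrogate is maximised at theta' = grad^(l) psi(eta), strictly unless grad^(l) phi(theta) = eta.
  This strict lambda-Young inequality is the tangent inequality of the strictly convex function
  (exp (l psi) - 1) / l at grad^(l) phi(theta), once psi is identified, up to an additive constant,
  with the value of the surrogate at its maximiser: both have the same gradient.
*)

lemma convex_on_has_derivative_above_tangent:
  fixes f :: "'a::real_normed_vector \<Rightarrow> real"
  assumes cvx: "convex_on S f" and der: "(f has_derivative f') (at x within S)"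
    and x: "x \<in> S" and z: "z \<in> S"
  shows "f x + f' (z - x) \<le> f z"
proof -
  define p where "p s = x + s *\<^sub>R (z - x)" for s :: real
  have p_convex: "p s = (1 - s) *\<^sub>R x + s *\<^sub>R z" for s
    by (simp add: p_def algebra_simps)
  have p_in: "p ` {0..1} \<subseteq> S"
    using convex_on_imp_convex[OF cvx] x z by (auto simp: p_convex convex_alt)
  have "(p has_derivative (\<lambda>s. s *\<^sub>R (z - x))) (at 0 within {0..1})"
    unfolding p_def by (auto intro!: derivative_eq_intros)
  moreover have "(f has_derivative f') (at (p 0) within p ` {0..1})"
    using has_derivative_subset[OF der p_in] by (simp add: p_def)
  ultimately have "((\<lambda>s. f (p s)) has_derivative (\<lambda>s. f' (s *\<^sub>R (z - x)))) (at 0 within {0..1})"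
    by (rule has_derivative_in_compose)
  moreover have "(\<lambda>s. f' (s *\<^sub>R (z - x))) = (*) (f' (z - x))"
    using has_derivative_bounded_linear[OF der]
    by (auto simp: linear_simps mult.commute)
  ultimately have "((\<lambda>s. f (p s)) has_real_derivative f' (z - x)) (at 0 within {0..1})"
    by (simp add: has_field_derivative_def)
  then have slope: "((\<lambda>s. (f (p s) - f x) / s) \<longlongrightarrow> f' (z - x)) (at_right 0)"
    by (simp add: has_field_derivative_iff at_within_Icc_at_right p_def)
  have "\<forall>\<^sub>F s in at_right 0. (f (p s) - f x) / s \<le> f z - f x"
    using eventually_at_right_real[OF zero_less_one]
  proof eventually_elim
    case (elim s)
    then have s: "0 < s" "s < 1" by auto
    then have "f (p s) \<le> (1 - s) * f x + s * f z"
      using convex_onD[OF cvx, of s x z] x z by (simp add: p_convex)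
    then have "f (p s) - f x \<le> s * (f z - f x)"
      by (simp add: algebra_simps)
    with s show "(f (p s) - f x) / s \<le> f z - f x"
      by (simp add: pos_divide_le_eq mult.commute)
  qed
  then have "f' (z - x) \<le> f z - f x"
    by (rule tendsto_upperbound[OF slope]) simp
  then show ?thesis by simp
qed

lemma strictly_convex_on_imp_convex_on:
  assumes "strictly_convex_on S f" and "convex S"
  shows "convex_on S f"
proof (rule convex_onI)
  fix t :: real and x y assume "0 < t" "t < 1" "x \<in> S" "y \<in> S"
  with assms(1) show "f ((1 - t) *\<^sub>R x + t *\<^sub>R y) \<le> (1 - t) * f x + t * f y"
    by (cases "x = y") (auto simp: strictly_convex_on_def algebra_simps less_imp_le)
qed (rule assms(2))

lemma strictly_convex_on_has_derivative_above_tangent: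
  fixes f :: "'a::real_normed_vector \<Rightarrow> real"
  assumes sc: "strictly_convex_on S f" and S: "convex S"
    and der: "(f has_derivative f') (at x within S)"
    and x: "x \<in> S" and y: "y \<in> S" and "x \<noteq> y"
  shows "f x + f' (y - x) < f y"
proof -
  define m where "m = (1/2) *\<^sub>R x + (1/2) *\<^sub>R y"
  have m: "m \<in> S"
    using convexD[OF S x y] by (simp add: m_def)
  have "f m < (1/2) * f x + (1/2) * f y"
    using sc x y \<open>x \<noteq> y\<close> unfolding strictly_convex_on_def m_def
    by (metis field_sum_of_halves add_diff_cancel_right' half_gt_zero zero_less_one
        less_add_same_cancel2)
  moreover have "f x + f' (m - x) \<le> f m"
    using convex_on_has_derivative_above_tangent[OF strictly_convex_on_imp_convex_on[OF sc S] der x m] .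
  moreover have "f' (m - x) = f' (y - x) / 2"
    using has_derivative_bounded_linear[OF der]
    by (simp add: m_def algebra_simps linear_simps flip: scaleR_diff_right)
  ultimately show ?thesis by simp
qed

lemma sum_ln_le_card_mult_ln_mean:
  fixes x :: "'i \<Rightarrow> real"
  assumes I: "finite I" "I \<noteq> {}" and x: "\<And>i. i \<in> I \<Longrightarrow> 0 < x i"
  shows "(\<Sum>i\<in>I. ln (x i)) \<le> card I * ln ((\<Sum>i\<in>I. x i) / card I)"
proof -
  have card: "0 < real (card I)"
    using I by (simp add: card_gt_0_iff)
  have "(\<Sum>i\<in>I. (1 / card I) * ln (x i)) \<le> ln (\<Sum>i\<in>I. (1 / card I) *\<^sub>R x i)"
    using x card by (intro concave_on_sum[OF I ln_concave]) auto
  then have "(1 / card I) * (\<Sum>i\<in>I. ln (x i)) \<le> ln ((\<Sum>i\<in>I. x i) / card I)"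
    by (simp add: sum_distrib_left sum_divide_distrib)
  with card show ?thesis
    by (simp add: field_simps)
qed

lemma weight_sum_eq_1:
  assumes "\<And>i. i < n \<Longrightarrow> 0 < 1 + l * (t \<bullet> y i)" and "0 < n"
  shows "(\<Sum>i<n. weight l n y t i) = 1"
proof -
  have "0 < (\<Sum>j<n. 1 / (1 + l * (t \<bullet> y j)))"
    using assms by (intro sum_pos) auto
  then show ?thesis
    unfolding weight_def sum_divide_distrib[symmetric] by simp
qed

lemma weight_pos:
  assumes "\<And>i. i < n \<Longrightarrow> 0 < 1 + l * (t \<bullet> y i)" and "i < n"
  shows "0 < weight l n y t i"
proof -
  have "0 < (\<Sum>j<n. 1 / (1 + l * (t \<bullet> y j)))"
    using assms by (intro sum_pos) auto
  with assms show ?thesis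
    by (simp add: weight_def)
qed

lemma weighted_sum_affine:
  assumes "\<And>i. i < n \<Longrightarrow> 0 < 1 + l * (t \<bullet> y i)" and "0 < n"
  shows "(\<Sum>i<n. weight l n y t i * (1 + l * (s \<bullet> y i)))
           = 1 + l * (s \<bullet> (\<Sum>i<n. weight l n y t i *\<^sub>R y i))"
  using weight_sum_eq_1[OF assms]
  by (simp add: distrib_left sum.distrib inner_sum_right sum_distrib_left mult.left_commute)

lemma weighted_mean_denom_pos:
  assumes "\<And>i. i < n \<Longrightarrow> 0 < 1 + l * (t \<bullet> y i)" and "0 < n"
    and "\<And>i. i < n \<Longrightarrow> 0 < 1 + l * (s \<bullet> y i)"
  shows "0 < 1 + l * (s \<bullet> (\<Sum>i<n. weight l n y t i *\<^sub>R y i))"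
proof -
  have "0 < (\<Sum>i<n. weight l n y t i * (1 + l * (s \<bullet> y i)))"
    using assms weight_pos[OF assms(1)] by (intro sum_pos) auto
  then show ?thesis
    by (simp add: weighted_sum_affine[OF assms(1,2)])
qed

lemma weighted_mean_in_convex:
  assumes "convex C" and "0 < n" and "\<And>i. i < n \<Longrightarrow> y i \<in> C"
    and "\<And>i. i < n \<Longrightarrow> 0 < 1 + l * (t \<bullet> y i)"
  shows "(\<Sum>i<n. weight l n y t i *\<^sub>R y i) \<in> C"
proof (rule convex_sum[OF _ assms(1)])
  show "(\<Sum>i<n. weight l n y t i) = 1"
    by (rule weight_sum_eq_1[OF assms(4,2)])
  show "0 \<le> weight l n y t i" if "i \<in> {..<n}" for i
    using weight_pos[OF assms(4)] that by (simp add: less_imp_le)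
qed (use assms(3) in auto)

lemma average_base_ratio:
  assumes t: "\<And>i. i < n \<Longrightarrow> 0 < 1 + l * (t \<bullet> y i)" and n: "0 < n"
  defines "\<eta> \<equiv> \<Sum>i<n. weight l n y t i *\<^sub>R y i"
  shows "(\<Sum>i<n. (1 + l * (s \<bullet> y i)) / (1 + l * (t \<bullet> y i))) / n
           = (1 + l * (s \<bullet> \<eta>)) / (1 + l * (t \<bullet> \<eta>))"
proof -
  define A where "A = (\<Sum>j<n. 1 / (1 + l * (t \<bullet> y j)))"
  have A: "0 < A"
    using t n by (auto simp: A_def intro!: sum_pos)
  have ratio_sum: "(\<Sum>i<n. (1 + l * (r \<bullet> y i)) / (1 + l * (t \<bullet> y i))) = A * (1 + l * (r \<bullet> \<eta>))"
    for r
  proof -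
    have "(\<Sum>i<n. (1 + l * (r \<bullet> y i)) / (1 + l * (t \<bullet> y i))) / A
        = (\<Sum>i<n. weight l n y t i * (1 + l * (r \<bullet> y i)))"
      by (simp add: sum_divide_distrib weight_def A_def)
    also have "\<dots> = 1 + l * (r \<bullet> \<eta>)"
      by (simp add: weighted_sum_affine[OF t n] \<eta>_def)
    finally show ?thesis
      using A by (simp add: field_simps)
  qed
  have "(\<Sum>i<n. (1 + l * (t \<bullet> y i)) / (1 + l * (t \<bullet> y i))) = (\<Sum>i<n. 1)"
    using t by (intro sum.cong) (simp_all add: less_imp_neq[symmetric])
  then show ?thesis
    using ratio_sum[of s] ratio_sum[of t] A n by simp
qed

lemma loglik_eq:
  "loglik l \<phi> n y s = (1 / l) * (\<Sum>i<n. ln (1 + l * (s \<bullet> y i))) - n * \<phi> s"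
  by (simp add: loglik_def sum_subtractf sum_distrib_left)

lemma loglik_gain_ge_surrogate_gain:
  fixes y :: "nat \<Rightarrow> 'a::euclidean_space" and \<phi> :: "'a \<Rightarrow> real"
  assumes l: "l < 0" and n: "0 < n"
    and a_pos: "\<And>i. i < n \<Longrightarrow> 0 < 1 + l * (t \<bullet> y i)"
    and b_pos: "\<And>i. i < n \<Longrightarrow> 0 < 1 + l * (t' \<bullet> y i)"
  defines "\<eta> \<equiv> \<Sum>i<n. weight l n y t i *\<^sub>R y i"
  shows "real n * (((1 / l) * ln (1 + l * (t' \<bullet> \<eta>)) - \<phi> t') - ((1 / l) * ln (1 + l * (t \<bullet> \<eta>)) - \<phi> t))
           \<le> loglik l \<phi> n y t' - loglik l \<phi> n y t"
proof -
  define a where "a i = 1 + l * (t \<bullet> y i)" for i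
  define b where "b i = 1 + l * (t' \<bullet> y i)" for i
  have eta_pos: "0 < 1 + l * (t' \<bullet> \<eta>)" "0 < 1 + l * (t \<bullet> \<eta>)"
    unfolding \<eta>_def using weighted_mean_denom_pos[of n l t y] a_pos b_pos n by blast+
  have "(\<Sum>i<n. ln (b i / a i)) \<le> card {..<n} * ln ((\<Sum>i<n. b i / a i) / card {..<n})"
    using a_pos b_pos n by (intro sum_ln_le_card_mult_ln_mean) (auto simp: a_def b_def)
  also have "\<dots> = n * ln ((1 + l * (t' \<bullet> \<eta>)) / (1 + l * (t \<bullet> \<eta>)))"
    using average_base_ratio[OF a_pos n, where s = t'] by (simp add: a_def b_def \<eta>_def)
  also have "\<dots> = n * (ln (1 + l * (t' \<bullet> \<eta>)) - ln (1 + l * (t \<bullet> \<eta>)))"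
    using eta_pos by (simp add: ln_div)
  finally have jensen:
    "(\<Sum>i<n. ln (b i / a i)) \<le> n * (ln (1 + l * (t' \<bullet> \<eta>)) - ln (1 + l * (t \<bullet> \<eta>)))" .
  have "(\<Sum>i<n. ln (b i / a i)) = (\<Sum>i<n. ln (b i) - ln (a i))"
    using a_pos b_pos by (intro sum.cong refl) (simp add: a_def b_def ln_div less_imp_neq[symmetric])
  then have log_ratio: "(\<Sum>i<n. ln (b i / a i)) = (\<Sum>i<n. ln (b i)) - (\<Sum>i<n. ln (a i))"
    by (simp add: sum_subtractf)
  have "loglik l \<phi> n y t' - loglik l \<phi> n y t
      = (1 / l) * (\<Sum>i<n. ln (b i / a i)) - n * (\<phi> t' - \<phi> t)"
    unfolding log_ratio loglik_eq by (simp add: a_def b_def algebra_simps)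
  moreover have "(1 / l) * (n * (ln (1 + l * (t' \<bullet> \<eta>)) - ln (1 + l * (t \<bullet> \<eta>))))
      \<le> (1 / l) * (\<Sum>i<n. ln (b i / a i))"
    using jensen l by (intro mult_left_mono_neg) auto
  ultimately show ?thesis
    by (simp add: algebra_simps)
qed

lemma exp_diff_divide_pos_iff:
  fixes u v l :: real
  shows "0 < (exp u - exp v) / l \<longleftrightarrow> 0 < (u - v) / l"
  by (simp add: zero_less_divide_iff)

lemma lam_grad_inner_denom:
  assumes "1 - l * (g \<bullet> t) \<noteq> 0"
  shows "1 + l * (t \<bullet> lam_grad l g t) = 1 / (1 - l * (g \<bullet> t))"
  using assms by (simp add: lam_grad_def inner_commute field_simps)

lemma grad_eq_scaled_lam_grad:
  assumes "1 - l * (g \<bullet> t) \<noteq> 0"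
  shows "g = (1 / (1 + l * (t \<bullet> lam_grad l g t))) *\<^sub>R lam_grad l g t"
  using assms by (simp add: lam_grad_inner_denom) (simp add: lam_grad_def)

lemma lam_grad_nonzero_imp_denom_nonzero:
  "lam_grad l g t \<noteq> 0 \<Longrightarrow> 1 - l * (g \<bullet> t) \<noteq> 0"
  by (auto simp: lam_grad_def)

locale lam_dual_pair =
  fixes l :: real
    and \<Theta> \<Xi> :: "'a::euclidean_space set"
    and \<phi> \<psi> :: "'a \<Rightarrow> real"
    and g\<phi> g\<psi> :: "'a \<Rightarrow> 'a"
  assumes lam_nonzero: "l \<noteq> 0"
    and phi_grad: "\<And>t. t \<in> \<Theta> \<Longrightarrow> GDERIV \<phi> t :> g\<phi> t"
    and phi_denom_pos: "\<And>t. t \<in> \<Theta> \<Longrightarrow> 0 < 1 - l * (g\<phi> t \<bullet> t)"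
    and psi_grad: "\<And>e. e \<in> \<Xi> \<Longrightarrow> GDERIV \<psi> e :> g\<psi> e"
    and psi_strict: "strictly_convex_on \<Xi> (\<lambda>e. (exp (l * \<psi> e) - 1) / l)"
    and convex_Xi: "convex \<Xi>"
    and lam_grad_psi_differentiable: "(\<lambda>e. lam_grad l (g\<psi> e) e) differentiable_on \<Xi>"
    and lam_grad_phi_in: "\<And>t. t \<in> \<Theta> \<Longrightarrow> lam_grad l (g\<phi> t) t \<in> \<Xi>"
    and lam_grad_psi_in: "\<And>e. e \<in> \<Xi> \<Longrightarrow> lam_grad l (g\<psi> e) e \<in> \<Theta>"
    and lam_grad_psi_phi:
      "\<And>t. t \<in> \<Theta> \<Longrightarrow> lam_grad l (g\<psi> (lam_grad l (g\<phi> t) t)) (lam_grad l (g\<phi> t) t) = t"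
    and lam_grad_phi_psi:
      "\<And>e. e \<in> \<Xi> \<Longrightarrow> lam_grad l (g\<phi> (lam_grad l (g\<psi> e) e)) (lam_grad l (g\<psi> e) e) = e"
begin

(* dual_value eta is the surrogate theta |-> (1/l) ln (1 + l theta.eta) - phi theta evaluated at its
  maximiser theta_of eta. *)
abbreviation eta_of :: "'a \<Rightarrow> 'a" where
  "eta_of t \<equiv> lam_grad l (g\<phi> t) t"

abbreviation theta_of :: "'a \<Rightarrow> 'a" where
  "theta_of e \<equiv> lam_grad l (g\<psi> e) e"

abbreviation dual_value :: "'a \<Rightarrow> real" where
  "dual_value e \<equiv> (1 / l) * ln (1 + l * (theta_of e \<bullet> e)) - \<phi> (theta_of e)"

lemma eta_of_denom_pos: "t \<in> \<Theta> \<Longrightarrow> 0 < 1 + l * (t \<bullet> eta_of t)"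
  using phi_denom_pos[of t] by (simp add: lam_grad_inner_denom)

lemma theta_of_denom_pos: "e \<in> \<Xi> \<Longrightarrow> 0 < 1 + l * (theta_of e \<bullet> e)"
  using eta_of_denom_pos[OF lam_grad_psi_in] lam_grad_phi_psi by simp

lemma grad_phi_theta_of:
  assumes "e \<in> \<Xi>"
  shows "g\<phi> (theta_of e) = (1 / (1 + l * (theta_of e \<bullet> e))) *\<^sub>R e"
  using grad_eq_scaled_lam_grad[of l "g\<phi> (theta_of e)" "theta_of e"]
    phi_denom_pos[OF lam_grad_psi_in[OF assms]] lam_grad_phi_psi[OF assms]
  by simp

lemma dual_value_has_derivative:
  assumes e: "e \<in> \<Xi>"
  shows "(dual_value has_derivative (\<lambda>h. (theta_of e \<bullet> h) / (1 + l * (theta_of e \<bullet> e))))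
           (at e within \<Xi>)"
proof -
  define c where "c = 1 + l * (theta_of e \<bullet> e)"
  have c: "0 < c" using theta_of_denom_pos[OF e] by (simp add: c_def)
  obtain DT where DT: "(theta_of has_derivative DT) (at e within \<Xi>)"
    using lam_grad_psi_differentiable e by (auto simp: differentiable_on_def differentiable_def)
  have "(\<phi> has_derivative (\<lambda>h. h \<bullet> g\<phi> (theta_of e))) (at (theta_of e))"
    using phi_grad[OF lam_grad_psi_in[OF e]] by (simp add: gderiv_def)
  then have D_phi: "((\<lambda>e. \<phi> (theta_of e)) has_derivative (\<lambda>h. (DT h \<bullet> e) / c)) (at e within \<Xi>)"
    using has_derivative_compose[OF DT] grad_phi_theta_of[OF e] by (simp add: c_def)
  have "((\<lambda>e. 1 + l * (theta_of e \<bullet> e)) has_derivative (\<lambda>h. l * (theta_of e \<bullet> h + DT h \<bullet> e)))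
      (at e within \<Xi>)"
    using DT by (auto intro!: derivative_eq_intros)
  from DERIV_compose_FDERIV[OF DERIV_ln this] c
  have D_ln: "((\<lambda>e. ln (1 + l * (theta_of e \<bullet> e))) has_derivative
      (\<lambda>h. l * (theta_of e \<bullet> h + DT h \<bullet> e) / c)) (at e within \<Xi>)"
    by (simp add: c_def divide_inverse mult.commute)
  have "(dual_value has_derivative (\<lambda>h. (1 / l) * (l * (theta_of e \<bullet> h + DT h \<bullet> e) / c) - (DT h \<bullet> e) / c))
      (at e within \<Xi>)"
    by (intro has_derivative_diff has_derivative_mult_right D_ln D_phi)
  then show ?thesis
    using lam_nonzero by (simp add: c_def add_divide_distrib)
qed

lemma psi_eq_dual_value_plus_const: "\<exists>C. \<forall>e\<in>\<Xi>. \<psi> e = dual_value e + C"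
proof (cases "\<Xi> = {}")
  case False
  then obtain e0 where e0: "e0 \<in> \<Xi>" by blast
  define D where "D e = \<psi> e - dual_value e" for e
  have D_der: "(D has_derivative
      (\<lambda>h. h \<bullet> g\<psi> e - (theta_of e \<bullet> h) / (1 + l * (theta_of e \<bullet> e)))) (at e within \<Xi>)"
    if e: "e \<in> \<Xi>" for e
    unfolding D_def
  proof (rule has_derivative_diff)
    show "(\<psi> has_derivative (\<lambda>h. h \<bullet> g\<psi> e)) (at e within \<Xi>)"
      using psi_grad[OF e] by (simp add: gderiv_def has_derivative_at_withinI)
  qed (rule dual_value_has_derivative[OF e])
  (* The gradient of psi is read off theta_of e only where theta_of e is nonzero, since lam_grad also
    vanishes when its denominator does (x / 0 = 0); the single exceptional point eta_of 0 does not
    disturb the mean value argument. *)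
  have D_const: "(D has_derivative (\<lambda>h. 0)) (at e within \<Xi>)" if e: "e \<in> \<Xi> - {eta_of 0}" for e
  proof -
    have "theta_of e \<noteq> 0"
    proof
      assume "theta_of e = 0"
      then have "e = eta_of 0"
        using lam_grad_phi_psi[of e] e by simp
      then show False using e by simp
    qed
    then have grad: "g\<psi> e = (1 / (1 + l * (e \<bullet> theta_of e))) *\<^sub>R theta_of e"
      by (intro grad_eq_scaled_lam_grad lam_grad_nonzero_imp_denom_nonzero)
    have "h \<bullet> g\<psi> e = (theta_of e \<bullet> h) / (1 + l * (theta_of e \<bullet> e))" for h
      using arg_cong[where f = "\<lambda>v. h \<bullet> v", OF grad] by (simp add: inner_commute)
    then show ?thesis
      using D_der[of e] e by simp
  qed
  have cont: "continuous_on \<Xi> D"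
    using D_der has_derivative_continuous continuous_on_eq_continuous_within by blast
  have "D e = D e0" if "e \<in> \<Xi>" for e
    using has_derivative_zero_unique_strong_convex[where K = "{eta_of 0}", OF convex_Xi _ cont e0 refl
        D_const that] by simp
  then have "\<psi> e = dual_value e + D e0" if "e \<in> \<Xi>" for e
    using that unfolding D_def by fastforce
  then show ?thesis by blast
qed simp

lemma psi_has_derivative:
  assumes e: "e \<in> \<Xi>"
  shows "(\<psi> has_derivative (\<lambda>h. (theta_of e \<bullet> h) / (1 + l * (theta_of e \<bullet> e)))) (at e within \<Xi>)"
proof -
  obtain C where C: "\<And>e. e \<in> \<Xi> \<Longrightarrow> \<psi> e = dual_value e + C"
    using psi_eq_dual_value_plus_const by blast
  have "((\<lambda>e. dual_value e + C) has_derivative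
      (\<lambda>h. (theta_of e \<bullet> h) / (1 + l * (theta_of e \<bullet> e)) + 0)) (at e within \<Xi>)"
    by (intro has_derivative_add dual_value_has_derivative e has_derivative_const)
  then show ?thesis
    using has_derivative_transform[OF e C] by simp
qed

lemma psi_strict_lam_tangent:
  assumes t: "t \<in> \<Theta>" and \<eta>: "\<eta> \<in> \<Xi>" and "eta_of t \<noteq> \<eta>"
    and dom: "0 < 1 + l * (t \<bullet> \<eta>)"
  shows "(ln (1 + l * (t \<bullet> \<eta>)) - ln (1 + l * (t \<bullet> eta_of t))) / l < \<psi> \<eta> - \<psi> (eta_of t)"
proof -
  define H where "H e = (exp (l * \<psi> e) - 1) / l" for e
  define e0 where "e0 = eta_of t"
  define c0 where "c0 = 1 + l * (t \<bullet> e0)"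
  have e0: "e0 \<in> \<Xi>" and theta_e0: "theta_of e0 = t"
    using lam_grad_phi_in[OF t] lam_grad_psi_phi[OF t] by (simp_all add: e0_def)
  have c0: "0 < c0"
    using eta_of_denom_pos[OF t] by (simp add: c0_def e0_def)
  have H_strict: "strictly_convex_on \<Xi> H"
    using psi_strict by (simp add: H_def[abs_def])
  have H_der: "(H has_derivative (\<lambda>h. exp (l * \<psi> e0) * ((t \<bullet> h) / c0))) (at e0 within \<Xi>)"
    using psi_has_derivative[OF e0] lam_nonzero unfolding H_def
    by (auto intro!: derivative_eq_intros simp: theta_e0 c0_def)
  have tangent: "H e0 + exp (l * \<psi> e0) * ((t \<bullet> (\<eta> - e0)) / c0) < H \<eta>"
    using strictly_convex_on_has_derivative_above_tangent[OF H_strict convex_Xi H_der e0 \<eta>]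
      \<open>eta_of t \<noteq> \<eta>\<close> by (simp add: e0_def)
  define u where "u = l * \<psi> \<eta>"
  define v where "v = l * \<psi> e0 + ln ((1 + l * (t \<bullet> \<eta>)) / c0)"
  have "exp v = exp (l * \<psi> e0) * ((1 + l * (t \<bullet> \<eta>)) / c0)"
    using c0 dom by (simp add: v_def exp_add)
  also have "(1 + l * (t \<bullet> \<eta>)) / c0 = 1 + l * (t \<bullet> (\<eta> - e0)) / c0"
    using c0 by (simp add: c0_def inner_diff_right field_simps)
  finally have exp_v: "exp v = exp (l * \<psi> e0) * (1 + l * (t \<bullet> (\<eta> - e0)) / c0)" .
  have "H \<eta> - (H e0 + exp (l * \<psi> e0) * ((t \<bullet> (\<eta> - e0)) / c0)) = (exp u - exp v) / l"
    unfolding exp_v using lam_nonzero c0 by (simp add: H_def u_def field_simps)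
  with tangent have "0 < (exp u - exp v) / l"
    by simp
  then have "0 < (u - v) / l"
    by (simp only: exp_diff_divide_pos_iff)
  moreover have "(u - v) / l = \<psi> \<eta> - \<psi> e0 - (ln (1 + l * (t \<bullet> \<eta>)) - ln c0) / l"
    using lam_nonzero c0 dom by (simp add: u_def v_def ln_div field_simps)
  ultimately show ?thesis
    by (simp add: e0_def c0_def)
qed

lemma theta_of_strict_maximizer:
  assumes t: "t \<in> \<Theta>" and \<eta>: "\<eta> \<in> \<Xi>" and "eta_of t \<noteq> \<eta>"
    and dom: "0 < 1 + l * (t \<bullet> \<eta>)"
  shows "(1 / l) * ln (1 + l * (t \<bullet> \<eta>)) - \<phi> t < dual_value \<eta>"
proof -
  obtain C where C: "\<And>e. e \<in> \<Xi> \<Longrightarrow> \<psi> e = dual_value e + C"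
    using psi_eq_dual_value_plus_const by blast
  have "\<psi> \<eta> - \<psi> (eta_of t) = dual_value \<eta> - ((1 / l) * ln (1 + l * (t \<bullet> eta_of t)) - \<phi> t)"
    using C[OF \<eta>] C[OF lam_grad_phi_in[OF t]] lam_grad_psi_phi[OF t] by simp
  with psi_strict_lam_tangent[OF assms] show ?thesis
    by (simp add: diff_divide_distrib)
qed

lemma loglik_increases_at_update:
  fixes y :: "nat \<Rightarrow> 'a" and n :: nat and t :: 'a
  defines "\<eta> \<equiv> \<Sum>i<n. weight l n y t i *\<^sub>R y i"
  assumes l: "l < 0" and n: "0 < n" and t: "t \<in> \<Theta>" and \<eta>: "\<eta> \<in> \<Xi>"
    and dom: "\<And>i. i < n \<Longrightarrow> 0 < 1 + l * (t \<bullet> y i)"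
    and dom': "\<And>i. i < n \<Longrightarrow> 0 < 1 + l * (theta_of \<eta> \<bullet> y i)"
    and moved: "eta_of t \<noteq> \<eta>"
  shows "loglik l \<phi> n y t < loglik l \<phi> n y (theta_of \<eta>)"
proof -
  have "(1 / l) * ln (1 + l * (t \<bullet> \<eta>)) - \<phi> t < dual_value \<eta>"
    using theta_of_strict_maximizer[OF t \<eta> moved] weighted_mean_denom_pos[OF dom n dom]
    by (simp add: \<eta>_def)
  then have "0 < real n * (dual_value \<eta> - ((1 / l) * ln (1 + l * (t \<bullet> \<eta>)) - \<phi> t))"
    using n by simp
  also have "\<dots> \<le> loglik l \<phi> n y (theta_of \<eta>) - loglik l \<phi> n y t"
    unfolding \<eta>_def by (rule loglik_gain_ge_surrogate_gain[OF l n dom dom'[unfolded \<eta>_def]])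
  finally show ?thesis
    by simp
qed

end

lemma lam_density_pos_imp_base_pos:
  assumes "0 < lam_density l \<nu> F \<theta> x"
  shows "0 < 1 + l * (\<theta> \<bullet> F x)"
proof (rule ccontr)
  assume "\<not> ?thesis"
  then have "pos_part (1 + l * (\<theta> \<bullet> F x)) = 0"
    by (simp add: pos_part_def)
  with assms show False
    by (simp add: lam_density_def lam_kernel_def)
qed

theorem theorem1:
  fixes l :: real
    and \<nu> :: "'x measure"
    and F :: "'x \<Rightarrow> 'a::euclidean_space"
    and g\<phi> g\<psi> :: "'a \<Rightarrow> 'a"
    and \<Xi> :: "'a set"
    and S :: "'x set"
    and n :: nat
    and xs :: "nat \<Rightarrow> 'x"
    and \<theta>0 :: 'a
    and \<theta> :: "nat \<Rightarrow> 'a"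
  defines "\<Theta> \<equiv> nat_param_set l \<nu> F"
    and "\<phi> \<equiv> lam_phi l \<nu> F"
    and "\<psi> \<equiv> lam_psi l \<nu> F"
    and "y \<equiv> (\<lambda>i. F (xs i))"
  assumes lam_neg: "l < 0"
    and F_meas: "F \<in> borel_measurable \<nu>"
    (* regularity condition (Wong & Zhang 2022, Cond. III.10), as in the standing assumptions *)
    and Theta_open: "open \<Theta>"
    and phi_grad: "\<And>t. t \<in> \<Theta> \<Longrightarrow> GDERIV \<phi> t :> g\<phi> t"
    and phi_pos: "\<And>t. t \<in> \<Theta> \<Longrightarrow> 1 - l * (g\<phi> t \<bullet> t) > 0"
    and Xi_def: "\<Xi> = (\<lambda>t. lam_grad l (g\<phi> t) t) ` \<Theta>"
    and psi_grad: "\<And>e. e \<in> \<Xi> \<Longrightarrow> GDERIV \<psi> e :> g\<psi> e"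
    and psi_strict: "strictly_convex_on \<Xi> (\<lambda>e. (exp (l * \<psi> e) - 1) / l)"
    and diffeo_phi: "(\<lambda>t. lam_grad l (g\<phi> t) t) differentiable_on \<Theta>"
    and diffeo_psi: "(\<lambda>e. lam_grad l (g\<psi> e) e) differentiable_on \<Xi>"
    and inv1: "\<And>t. t \<in> \<Theta> \<Longrightarrow> lam_grad l (g\<psi> (lam_grad l (g\<phi> t) t)) (lam_grad l (g\<phi> t) t) = t"
    and inv2: "\<And>e. e \<in> \<Xi> \<Longrightarrow> lam_grad l (g\<psi> e) e \<in> \<Theta>"
    and inv3: "\<And>e. e \<in> \<Xi> \<Longrightarrow> lam_grad l (g\<phi> (lam_grad l (g\<psi> e) e)) (lam_grad l (g\<psi> e) e) = e"
    and Xi_convex: "convex \<Xi>"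
    and support: "\<And>t. t \<in> \<Theta> \<Longrightarrow> {x \<in> space \<nu>. lam_density l \<nu> F t x > 0} = S"
    and support_in_Xi: "F ` S \<subseteq> \<Xi>"
    (* data and iteration *)
    and n_pos: "n \<ge> 1"
    and data: "\<And>i. i < n \<Longrightarrow> xs i \<in> S"
    and theta0: "\<theta>0 \<in> \<Theta>"
    and iter0: "\<theta> 0 = \<theta>0"
    and iterSuc: "\<And>k. \<theta> (Suc k) =
        (let \<eta> = (\<Sum>i<n. weight l n y (\<theta> k) i *\<^sub>R y i) in lam_grad l (g\<psi> \<eta>) \<eta>)"
  shows "\<forall>k. lam_grad l (g\<phi> (\<theta> k)) (\<theta> k) \<noteq> (\<Sum>i<n. weight l n y (\<theta> k) i *\<^sub>R y i)
           \<longrightarrow> loglik l \<phi> n y (\<theta> (Suc k)) > loglik l \<phi> n y (\<theta> k)"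
proof -
  interpret lam_dual_pair l \<Theta> \<Xi> \<phi> \<psi> g\<phi> g\<psi>
    using lam_neg phi_grad phi_pos psi_grad psi_strict Xi_convex diffeo_psi inv1 inv2 inv3
    by unfold_locales (auto simp: Xi_def)
  have data_dom: "0 < 1 + l * (t \<bullet> y i)" if "t \<in> \<Theta>" and "i < n" for t i
    using data[OF that(2)] support[OF that(1)] lam_density_pos_imp_base_pos by (auto simp: y_def)
  have n: "0 < n"
    using n_pos by simp
  have mean_in_Xi: "(\<Sum>i<n. weight l n y t i *\<^sub>R y i) \<in> \<Xi>" if "t \<in> \<Theta>" for t
    using data support_in_Xi data_dom[OF that]
    by (intro weighted_mean_in_convex[OF Xi_convex n]) (auto simp: y_def)
  have iterate_in_Theta: "\<theta> k \<in> \<Theta>" for k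
    by (induction k) (simp_all add: iter0 theta0 iterSuc Let_def lam_grad_psi_in mean_in_Xi)
  show ?thesis
  proof (intro allI impI)
    fix k
    assume "eta_of (\<theta> k) \<noteq> (\<Sum>i<n. weight l n y (\<theta> k) i *\<^sub>R y i)"
    then show "loglik l \<phi> n y (\<theta> (Suc k)) > loglik l \<phi> n y (\<theta> k)"
      using loglik_increases_at_update[OF lam_neg n iterate_in_Theta mean_in_Xi[OF iterate_in_Theta]
          data_dom[OF iterate_in_Theta]] data_dom[OF iterate_in_Theta[of "Suc k"]]
      by (simp add: iterSuc Let_def)
  qed
qed

end
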